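(* Let $F:\mathbb{R}\to[0,1]$ be an arbitrary distribution function, let $\alpha\in(0,1)$, and put $\xi=F^{\wedge}(\alpha)$ and $\beta=\Delta F(\xi)$. Let $X,V$ be real random variables on a probability space $(\Omega,\mathcal{F},\mathbb{P})$ such that $V\sim U(0,1)$ and $V$ is independent of $X$. Define $F_V(X)(\omega)=F_{V(\omega)}(X(\omega))$ on $\{V\in(0,1]\}$. Then \[\mathbb{P}\big(F_V(X)\le\alpha\big)-\alpha=\mathbb{P}\big(X>\xi\text{ and }F(X)=\alpha\big)+c_\beta\big(\mathbb{P}(X=\xi)-\beta\big)+\big(\mathbb{P}(X\le\xi)-F(\xi)\big),\] where $c_\beta=0$ if $\beta=0$ and $c_\beta=\frac{\alpha-F(\xi)}{\beta}$ if $\beta\neq0$.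
   Context: A distribution function is a non-decreasing, right-continuous $F:\mathbb{R}\to[0,1]$ with limits $0$ at $-\infty$ and $1$ at $+\infty$ ($F$ need not be the distribution function of $X$). $F(x-)=\lim_{z\uparrow x}F(z)$, $\Delta F(x)=F(x)-F(x-)$, $F_\lambda(x)=F(x-)+\lambda\Delta F(x)$ for $\lambda\in[0,1]$, and $F^{\wedge}(\alpha)=\inf\{x:F(x)\ge\alpha\}$. The event $\{F_V(X)\le\alpha\}$ is understood as $\{V\in(0,1],\ F_V(X)\le\alpha\}$ (a set of full probability complement is irrelevant since $\mathbb{P}(V\in(0,1])=1$). *)

theory Defs
  imports "HOL-Probability.Probability"
begin

definition is_distfun :: "(real \<Rightarrow> real) \<Rightarrow> bool" where
  "is_distfun F \<longleftrightarrow> mono F \<and> (\<forall>x. 0 \<le> F x \<and> F x \<le> 1) \<and>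
     (\<forall>x. continuous (at_right x) F) \<and> (F \<longlongrightarrow> 0) at_bot \<and> (F \<longlongrightarrow> 1) at_top"

definition left_lim :: "(real \<Rightarrow> real) \<Rightarrow> real \<Rightarrow> real" where
  "left_lim F x = Lim (at_left x) F"

definition jump :: "(real \<Rightarrow> real) \<Rightarrow> real \<Rightarrow> real" where
  "jump F x = F x - left_lim F x"

definition Flam :: "(real \<Rightarrow> real) \<Rightarrow> real \<Rightarrow> real \<Rightarrow> real" where
  "Flam F lam x = left_lim F x + lam * jump F x"

definition geninv :: "(real \<Rightarrow> real) \<Rightarrow> real \<Rightarrow> real" where
  "geninv F a = Inf {x. a \<le> F x}"

end

theory Submission
  imports Defs
begin

text \<open>
  Conditionally on \<open>X = x\<close>, the event \<open>F\<^sub>V(X) \<le> \<alpha>\<close> is certain for \<open>x < \<xi>\<close>,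
  happens for \<open>x > \<xi>\<close> exactly when \<open>F(x) = \<alpha>\<close> (as then \<open>F(x-) \<ge> \<alpha>\<close>), and at \<open>x = \<xi>\<close>
  it is the event \<open>V \<le> t\<close> with \<open>t = (\<alpha> - F(\<xi>-)) / \<beta>\<close>, of probability \<open>t = 1 + c\<^sub>\<beta>\<close>.
  Independence and uniformity of \<open>V\<close> give
  \<open>P(F\<^sub>V(X) \<le> \<alpha>) = P(X < \<xi>) + P(X > \<xi>, F(X) = \<alpha>) + (1 + c\<^sub>\<beta>) P(X = \<xi>)\<close>,
  and the theorem is a rearrangement using \<open>c\<^sub>\<beta> \<beta> = \<alpha> - F(\<xi>)\<close>.
\<close>

lemma left_lim_mono_eq_Sup:
  fixes F :: "real \<Rightarrow> real"
  assumes "mono F"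
  shows "left_lim F x = Sup (F ` {..<x})"
proof -
  have "(F \<longlongrightarrow> Sup (F ` ({..<x} \<inter> UNIV))) (at x within {..<x} \<inter> UNIV)"
    by (rule Lim_left_bound[where K = "F x"]) (auto intro: monoD[OF assms])
  then show ?thesis
    unfolding left_lim_def by (intro tendsto_Lim) (simp_all add: trivial_limit_at_left_real)
qed

lemma
  fixes F :: "real \<Rightarrow> real"
  assumes "mono F"
  shows mono_le_left_lim: "y < x \<Longrightarrow> F y \<le> left_lim F x"
    and mono_left_lim_le: "left_lim F x \<le> F x"
    and mono_left_lim_least: "(\<And>y. y < x \<Longrightarrow> F y \<le> c) \<Longrightarrow> left_lim F x \<le> c"
proof -
  have bdd: "bdd_above (F ` {..<x})"
    by (rule bdd_aboveI[of _ "F x"]) (auto intro: monoD[OF assms])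
  show "y < x \<Longrightarrow> F y \<le> left_lim F x"
    unfolding left_lim_mono_eq_Sup[OF assms] by (intro cSup_upper[OF _ bdd]) auto
  show "left_lim F x \<le> F x"
    unfolding left_lim_mono_eq_Sup[OF assms] by (intro cSup_least) (auto intro: monoD[OF assms])
  show "(\<And>y. y < x \<Longrightarrow> F y \<le> c) \<Longrightarrow> left_lim F x \<le> c"
    unfolding left_lim_mono_eq_Sup[OF assms] by (intro cSup_least) auto
qed

lemma mono_jump_nonneg: "mono F \<Longrightarrow> 0 \<le> jump F x"
  using mono_left_lim_le[of F x] by (simp add: jump_def)

lemma
  fixes F :: "real \<Rightarrow> real"
  assumes "is_distfun F" "0 < \<alpha>" "\<alpha> < 1"
  shows distfun_less_geninv: "x < geninv F \<alpha> \<Longrightarrow> F x < \<alpha>"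
    and distfun_geninv_ge: "\<alpha> \<le> F (geninv F \<alpha>)"
proof -
  have mono: "mono F" and rc: "\<And>x. (F \<longlongrightarrow> F x) (at_right x)"
    and top: "(F \<longlongrightarrow> 1) at_top" and bot: "(F \<longlongrightarrow> 0) at_bot"
    using assms(1) unfolding is_distfun_def by (auto simp: continuous_within)
  define S where "S = {x. \<alpha> \<le> F x}"
  have xi: "geninv F \<alpha> = Inf S"
    unfolding geninv_def S_def ..
  obtain t where "\<alpha> < F t"
    using order_tendstoD(1)[OF top assms(3)] by (auto simp: eventually_at_top_linorder)
  then have ne: "S \<noteq> {}"
    unfolding S_def by (auto intro!: exI[of _ t])
  obtain b where b: "\<And>x. x \<le> b \<Longrightarrow> F x < \<alpha>"
    using order_tendstoD(2)[OF bot assms(2)] by (auto simp: eventually_at_bot_linorder)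
  have bdd: "bdd_below S"
    unfolding S_def by (rule bdd_belowI[of _ b]) (use b in \<open>force simp: not_less[symmetric]\<close>)
  show "x < geninv F \<alpha> \<Longrightarrow> F x < \<alpha>"
    using cInf_lower[OF _ bdd, of x] by (force simp: xi S_def)
  have "eventually (\<lambda>z. \<alpha> \<le> F z) (at_right (geninv F \<alpha>))"
  proof -
    have "eventually (\<lambda>z. geninv F \<alpha> < z) (at_right (geninv F \<alpha>))"
      by (rule eventually_at_right_less)
    then show ?thesis
    proof eventually_elim
      case (elim z)
      then obtain s where "s \<in> S" "s < z"
        using cInf_less_iff[OF ne bdd] xi by auto
      then show ?case
        unfolding S_def using monoD[OF mono, of s z] by auto
    qed
  qed
  then show "\<alpha> \<le> F (geninv F \<alpha>)"
    by (rule tendsto_lowerbound[OF rc]) (simp add: trivial_limit_at_right_real)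
qed

lemma distfun_left_lim_geninv_le:
  assumes "is_distfun F" "0 < \<alpha>" "\<alpha> < 1"
  shows "left_lim F (geninv F \<alpha>) \<le> \<alpha>"
  using assms(1) distfun_less_geninv[OF assms]
  by (intro mono_left_lim_least) (auto simp: is_distfun_def intro: less_imp_le)

text \<open>The level \<open>t\<close> such that \<open>F\<^sub>v(x) \<le> \<alpha> \<longleftrightarrow> v \<le> t\<close> at an atom \<open>x\<close>; the value \<open>1\<close>
  at continuity points is a convention that makes \<open>jump_fraction_eq\<close> hold everywhere.\<close>
definition jump_fraction :: "(real \<Rightarrow> real) \<Rightarrow> real \<Rightarrow> real \<Rightarrow> real" where
  "jump_fraction F \<alpha> x = (if jump F x = 0 then 1 else (\<alpha> - left_lim F x) / jump F x)"

lemma jump_fraction_eq: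
  "jump_fraction F \<alpha> x = 1 + (if jump F x = 0 then 0 else (\<alpha> - F x) / jump F x)"
  by (simp add: jump_fraction_def jump_def field_simps)

lemma distfun_jump_fraction_bounds:
  assumes "is_distfun F" "0 < \<alpha>" "\<alpha> < 1"
  shows "0 \<le> jump_fraction F \<alpha> (geninv F \<alpha>)" and "jump_fraction F \<alpha> (geninv F \<alpha>) \<le> 1"
  using distfun_left_lim_geninv_le[OF assms] distfun_geninv_ge[OF assms]
  by (auto simp: jump_fraction_def jump_def divide_le_eq_1)

lemma distfun_Flam_le_iff:
  fixes F :: "real \<Rightarrow> real"
  assumes "is_distfun F" "0 < \<alpha>" "\<alpha> < 1" "0 < v" "v \<le> 1"
  defines "\<xi> \<equiv> geninv F \<alpha>"
  shows "Flam F v x \<le> \<alpha> \<longleftrightarrow>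
           x < \<xi> \<or> (\<xi> < x \<and> F x = \<alpha>) \<or> (x = \<xi> \<and> v \<le> jump_fraction F \<alpha> \<xi>)"
proof -
  have mono: "mono F"
    using assms(1) by (simp add: is_distfun_def)
  note jump_nonneg = mono_jump_nonneg[OF mono]
  consider "x < \<xi>" | "\<xi> < x" | "x = \<xi>" by linarith
  then show ?thesis
  proof cases
    case 1
    have "Flam F v x \<le> left_lim F x + 1 * jump F x"
      unfolding Flam_def using jump_nonneg[of x] assms(5) by (intro add_left_mono mult_right_mono)
    also have "\<dots> = F x"
      by (simp add: jump_def)
    finally show ?thesis
      using distfun_less_geninv[OF assms(1-3) 1[unfolded \<xi>_def]] 1 by simp
  next
    case 2
    have "\<alpha> \<le> left_lim F x"
      using mono_le_left_lim[OF mono 2] distfun_geninv_ge[OF assms(1-3)] by (simp add: \<xi>_def)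
    moreover have "0 \<le> v * jump F x" and "v * jump F x = 0 \<longleftrightarrow> jump F x = 0"
      using jump_nonneg[of x] assms(4) by auto
    ultimately have "Flam F v x \<le> \<alpha> \<longleftrightarrow> left_lim F x = \<alpha> \<and> jump F x = 0"
      unfolding Flam_def by linarith
    also have "\<dots> \<longleftrightarrow> F x = \<alpha>"
      using \<open>\<alpha> \<le> left_lim F x\<close> mono_left_lim_le[OF mono, of x] by (auto simp: jump_def)
    finally show ?thesis
      using 2 by simp
  next
    case 3
    have "Flam F v \<xi> \<le> \<alpha> \<longleftrightarrow> v \<le> jump_fraction F \<alpha> \<xi>"
    proof (cases "jump F \<xi> = 0")
      case True
      then show ?thesis
        using distfun_left_lim_geninv_le[OF assms(1-3)] assms(5)
        by (simp add: Flam_def jump_fraction_def \<xi>_def)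
    next
      case False
      then have "0 < jump F \<xi>"
        using jump_nonneg[of \<xi>] by simp
      then show ?thesis
        by (auto simp: Flam_def jump_fraction_def pos_le_divide_eq algebra_simps)
    qed
    then show ?thesis
      using 3 by simp
  qed
qed

lemma (in prob_space) prob_indep_uniform_le:
  assumes "indep_var borel X borel V"
    and "distr M lborel V = uniform_measure lborel {0..1}"
    and "A \<in> sets borel" "0 \<le> s" "s \<le> 1"
  shows "\<P>(\<omega> in M. X \<omega> \<in> A \<and> V \<omega> \<in> {0<..s}) = \<P>(\<omega> in M. X \<omega> \<in> A) * s"
proof -
  have V: "V \<in> borel_measurable M"
    using indep_var_rv2[OF assms(1)] by simp
  have "\<P>(\<omega> in M. V \<omega> \<in> {0<..s}) = measure (distr M lborel V) {0<..s}"
    using V by (subst measure_distr) (auto intro!: arg_cong[where f="measure M"])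
  also have "\<dots> = measure lborel ({0..1} \<inter> {0<..s}) / measure lborel {0..1::real}"
    unfolding assms(2) by (subst measure_uniform_measure) auto
  also have "{0..1} \<inter> {0<..s} = {0<..s}"
    using assms(5) by auto
  also have "measure lborel {0<..s} / measure lborel {0..1::real} = s"
    using assms(4) by simp
  finally show ?thesis
    using prob_indep_random_variable[OF assms(1,3), of "{0<..s}"] by simp
qed

lemma (in prob_space) prob_Flam_le:
  assumes "is_distfun F" "0 < \<alpha>" "\<alpha> < 1"
    and "indep_var borel X borel V"
    and "distr M lborel V = uniform_measure lborel {0..1}"
  defines "\<xi> \<equiv> geninv F \<alpha>"
  shows "\<P>(\<omega> in M. 0 < V \<omega> \<and> V \<omega> \<le> 1 \<and> Flam F (V \<omega>) (X \<omega>) \<le> \<alpha>)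
       = \<P>(\<omega> in M. X \<omega> < \<xi>) + \<P>(\<omega> in M. \<xi> < X \<omega> \<and> F (X \<omega>) = \<alpha>)
         + \<P>(\<omega> in M. X \<omega> = \<xi>) * jump_fraction F \<alpha> \<xi>"
proof -
  define t where "t = jump_fraction F \<alpha> \<xi>"
  have t: "0 \<le> t" "t \<le> 1"
    using distfun_jump_fraction_bounds[OF assms(1-3)] by (simp_all add: t_def \<xi>_def)
  have [measurable]: "X \<in> borel_measurable M" "V \<in> borel_measurable M"
    using indep_var_rv1[OF assms(4)] indep_var_rv2[OF assms(4)] by simp_all
  have [measurable]: "F \<in> borel_measurable borel"
    using assms(1) by (intro borel_measurable_mono) (simp add: is_distfun_def)
  have B: "{x. \<xi> < x \<and> F x = \<alpha>} \<in> sets borel"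
    by measurable
  have "{\<omega> \<in> space M. 0 < V \<omega> \<and> V \<omega> \<le> 1 \<and> Flam F (V \<omega>) (X \<omega>) \<le> \<alpha>}
     = {\<omega> \<in> space M. X \<omega> \<in> {..<\<xi>} \<and> V \<omega> \<in> {0<..1}}
       \<union> {\<omega> \<in> space M. X \<omega> \<in> {x. \<xi> < x \<and> F x = \<alpha>} \<and> V \<omega> \<in> {0<..1}}
       \<union> {\<omega> \<in> space M. X \<omega> \<in> {\<xi>} \<and> V \<omega> \<in> {0<..t}}"
    using distfun_Flam_le_iff[OF assms(1-3)] t by (auto simp: t_def \<xi>_def)
  then have "\<P>(\<omega> in M. 0 < V \<omega> \<and> V \<omega> \<le> 1 \<and> Flam F (V \<omega>) (X \<omega>) \<le> \<alpha>)
      = \<P>(\<omega> in M. X \<omega> \<in> {..<\<xi>} \<and> V \<omega> \<in> {0<..1})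
        + \<P>(\<omega> in M. X \<omega> \<in> {x. \<xi> < x \<and> F x = \<alpha>} \<and> V \<omega> \<in> {0<..1})
        + \<P>(\<omega> in M. X \<omega> \<in> {\<xi>} \<and> V \<omega> \<in> {0<..t})"
    by (simp only:, (subst finite_measure_Union, (measurable; fail), (measurable; fail), force)+, simp)
  also have "\<dots> = \<P>(\<omega> in M. X \<omega> < \<xi>) + \<P>(\<omega> in M. \<xi> < X \<omega> \<and> F (X \<omega>) = \<alpha>)
        + \<P>(\<omega> in M. X \<omega> = \<xi>) * t"
    using prob_indep_uniform_le[OF assms(4,5), of "{..<\<xi>}" 1]
      prob_indep_uniform_le[OF assms(4,5) B, of 1] prob_indep_uniform_le[OF assms(4,5), of "{\<xi>}" t] t
    by simp
  finally show ?thesis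
    unfolding t_def .
qed

theorem mainTheorem7:
  fixes M :: "'a measure" and F :: "real \<Rightarrow> real" and X V :: "'a \<Rightarrow> real" and \<alpha> :: real
  assumes "prob_space M"
    and "is_distfun F"
    and "0 < \<alpha>" and "\<alpha> < 1"
    and "X \<in> borel_measurable M" and "V \<in> borel_measurable M"
    and "distr M lborel V = uniform_measure lborel {0..1}"
    and "prob_space.indep_var M borel X borel V"
  shows "let \<xi> = geninv F \<alpha>; \<beta> = jump F \<xi>;
             c = (if \<beta> = 0 then 0 else (\<alpha> - F \<xi>) / \<beta>) in
         measure M {\<omega> \<in> space M. 0 < V \<omega> \<and> V \<omega> \<le> 1 \<and> Flam F (V \<omega>) (X \<omega>) \<le> \<alpha>} - \<alpha>
         = measure M {\<omega> \<in> space M. X \<omega> > \<xi> \<and> F (X \<omega>) = \<alpha>}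
           + c * (measure M {\<omega> \<in> space M. X \<omega> = \<xi>} - \<beta>)
           + (measure M {\<omega> \<in> space M. X \<omega> \<le> \<xi>} - F \<xi>)"
proof -
  interpret prob_space M by fact
  define \<xi> where "\<xi> = geninv F \<alpha>"
  define \<beta> where "\<beta> = jump F \<xi>"
  define c where "c = (if \<beta> = 0 then 0 else (\<alpha> - F \<xi>) / \<beta>)"
  have "\<P>(\<omega> in M. X \<omega> \<le> \<xi>) = \<P>(\<omega> in M. X \<omega> < \<xi>) + \<P>(\<omega> in M. X \<omega> = \<xi>)"
    using assms(5) by (subst finite_measure_Union[symmetric]) (auto intro!: arg_cong[where f=prob])
  moreover have "c * \<beta> = \<alpha> - F \<xi>"
    using distfun_left_lim_geninv_le[OF assms(2-4)] distfun_geninv_ge[OF assms(2-4)]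
    by (auto simp: c_def \<beta>_def \<xi>_def jump_def)
  ultimately show ?thesis
    using prob_Flam_le[OF assms(2-4,8,7)] jump_fraction_eq[of F \<alpha> \<xi>]
    unfolding Let_def \<xi>_def[symmetric] \<beta>_def[symmetric] c_def[symmetric]
    by (simp add: algebra_simps)
qed

end
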